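(* Let $X$ be a periodic commutative semigroup with a unique idempotent $e$. If the maximal subgroup $H_e$ of $X$ is bounded and for every infinite set $A\subseteq X$ the set $AA=\{xy:x,y\in A\}$ is not a singleton, then $X$ is $\mathsf{T_{1}S}$-closed.
   Context: $\mathsf{T_{1}S}$ is the class of topological semigroups satisfying the $T_1$ separation axiom. A semigroup $X$ is $\mathsf{T_{1}S}$-closed if for every isomorphic topological embedding of $X$ (with discrete topology) into some $Y\in\mathsf{T_{1}S}$ the image is closed in $Y$. Periodic: every element has an idempotent power. $H_e$ is the maximal subgroup containing $e$; a group is bounded if some exponent $n\ge1$ satisfies $x^n=e$ for all $x$. *)

theory Defs
  imports "HOL-Analysis.Analysis"
begin

text \<open>Positive powers in a semigroup (no unit needed): spow x n = x^n for n \<ge> 1.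
  The value at n = 0 is irrelevant; all uses are guarded by n \<ge> 1.\<close>
fun spow :: "'a::semigroup_mult \<Rightarrow> nat \<Rightarrow> 'a" where
  "spow x 0 = x"
| "spow x (Suc 0) = x"
| "spow x (Suc (Suc n)) = spow x (Suc n) * x"

definition idempotent :: "'a::semigroup_mult \<Rightarrow> bool" where
  "idempotent x \<longleftrightarrow> x * x = x"

definition periodic_semigroup :: "'a::semigroup_mult itself \<Rightarrow> bool" where
  "periodic_semigroup _ \<longleftrightarrow> (\<forall>x::'a. \<exists>n\<ge>1. idempotent (spow x n))"

definition is_subgroup :: "'a::semigroup_mult set \<Rightarrow> bool" where
  "is_subgroup G \<longleftrightarrow> (\<forall>x\<in>G. \<forall>y\<in>G. x * y \<in> G) \<and>
     (\<exists>u\<in>G. \<forall>x\<in>G. u * x = x \<and> x * u = x \<and> (\<exists>y\<in>G. x * y = u \<and> y * x = u))"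

definition max_subgroup :: "'a::semigroup_mult \<Rightarrow> 'a set" where
  "max_subgroup e = \<Union>{G. e \<in> G \<and> is_subgroup G}"

definition bounded_group :: "'a::semigroup_mult set \<Rightarrow> 'a \<Rightarrow> bool" where
  "bounded_group H e \<longleftrightarrow> (\<exists>n\<ge>1. \<forall>x\<in>H. spow x n = e)"

text \<open>T1S-closedness relative to the T1 topological semigroups carried by a type 'b:
  every isomorphic topological embedding of the discrete semigroup 'a into 'b has closed image.\<close>
definition T1S_closed_in :: "'b::{topological_semigroup_mult,t1_space} itself \<Rightarrow> 'a::semigroup_mult itself \<Rightarrow> bool" where
  "T1S_closed_in _ _ \<longleftrightarrow>
     (\<forall>h::'a \<Rightarrow> 'b. (\<forall>x y. h (x * y) = h x * h y) \<and>
        embedding_map (discrete_topology UNIV) euclidean h \<longrightarrow> closed (range h))"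

end

theory Submission
  imports Defs
begin

(* Let h embed the discrete semigroup X into a T1 topological semigroup. As range h is discrete,
   a product of points of X that converges into range h is eventually constant; since AA is never a
   singleton for infinite A, a limit point y of range h outside it has y * y outside range h, hence
   all y^(2^j) too. Bounded exponent of H_e = X e makes h ` H_e closed, which forces y * h x into
   range h, and then every power y^k stays outside range h. So y^n is a limit point of the image of
   the nil part {a. a e = e}. Points a near y^n act like multiplication by y^n on finitely many
   elements, and their long powers extend any finite set F of the nil part with F F = {e} by a new
   element; the resulting infinite set A with A A = {e} contradicts the hypothesis. *)

lemma spow_Suc: "n \<ge> 1 \<Longrightarrow> spow x (Suc n) = spow x n * x"
  by (cases n) auto

lemma spow_add:
  assumes "a \<ge> 1"
  shows "b \<ge> 1 \<Longrightarrow> spow x (a + b) = spow x a * spow x b"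
proof (induction b rule: nat_induct_at_least)
  case base
  show ?case using assms by (simp add: spow_Suc)
next
  case (Suc b)
  then show ?case using assms by (simp add: spow_Suc mult.assoc)
qed

lemma spow_mult_distrib: "spow ((x::'a::ab_semigroup_mult) * y) k = spow x k * spow y k"
  by (induction x k rule: spow.induct) (auto simp: ac_simps)

lemma spow_hom: "(\<And>x y. h (x * y) = h x * h y) \<Longrightarrow> h (spow x k) = spow (h x) k"
  by (induction x k rule: spow.induct) auto

lemma tendsto_spow:
  "(f \<longlongrightarrow> (a::'b::topological_semigroup_mult)) F \<Longrightarrow> ((\<lambda>x. spow (f x) k) \<longlongrightarrow> spow a k) F"
proof (induction k)
  case (Suc k)
  then show ?case by (cases k) (auto intro: tendsto_mult)
qed simp

lemma continuous_on_spow: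
  "continuous_on S (f::_ \<Rightarrow> 'b::topological_semigroup_mult) \<Longrightarrow> continuous_on S (\<lambda>x. spow (f x) k)"
  unfolding continuous_on_def by (auto intro: tendsto_spow)

lemma closure_image_mem:
  assumes "continuous_on UNIV f" "f ` S \<subseteq> T" "z \<in> closure S"
  shows "f z \<in> closure T"
  using continuous_image_closure_subset[OF assms(1), of S] closure_mono[OF assms(2)] assms(3)
  by blast

text \<open>\<open>mult_pow a r c\<close> is \<open>a\<^sup>r c\<close>, which also makes sense for \<open>r = 0\<close> in a semigroup without unit.\<close>
definition mult_pow :: "'a::semigroup_mult \<Rightarrow> nat \<Rightarrow> 'a \<Rightarrow> 'a" where
  "mult_pow a r c = ((*) a ^^ r) c"

lemma mult_pow_0 [simp]: "mult_pow a 0 c = c"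
  by (simp add: mult_pow_def)

lemma mult_pow_Suc: "mult_pow a (Suc r) c = a * mult_pow a r c"
  by (simp add: mult_pow_def)

lemma mult_pow_add: "mult_pow a r (mult_pow a s c) = mult_pow a (r + s) c"
  by (simp add: mult_pow_def funpow_add)

lemma mult_pow_mult: "mult_pow a r c * d = mult_pow a r (c * d)"
  by (induction r) (auto simp: mult_pow_Suc mult.assoc)

lemma mult_pow_eq_spow: "r \<ge> 1 \<Longrightarrow> mult_pow a r (c::'a::ab_semigroup_mult) = spow a r * c"
proof (induction r rule: nat_induct_at_least)
  case (Suc r)
  then show ?case by (simp add: mult_pow_Suc spow_Suc ac_simps)
qed (simp add: mult_pow_def)

lemma mult_pow_prod:
  "mult_pow a r (c::'a::ab_semigroup_mult) * mult_pow a s d = mult_pow a (r + s) (c * d)"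
  by (simp only: mult_pow_mult mult_pow_add mult.commute[of c])

lemma pairwise_chain_by_extension:
  assumes extend: "\<And>F. finite F \<Longrightarrow> F \<subseteq> S \<Longrightarrow> \<forall>u\<in>F. \<forall>v\<in>F. R u v \<Longrightarrow>
      \<exists>d\<in>S - F. R d d \<and> (\<forall>u\<in>F. R d u \<and> R u d)"
  obtains G :: "nat \<Rightarrow> 'a set"
  where "mono G" "\<And>k. finite (G k)" "\<And>k. G k \<subseteq> S" "\<And>k. card (G k) = k"
    "\<And>k u v. u \<in> G k \<Longrightarrow> v \<in> G k \<Longrightarrow> R u v"
proof -
  define next_elem where "next_elem F = (SOME d. d \<in> S - F \<and> R d d \<and> (\<forall>u\<in>F. R d u \<and> R u d))" for F
  define G where "G k = rec_nat {} (\<lambda>_ F. insert (next_elem F) F) k" for k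
  have G_Suc: "G (Suc k) = insert (next_elem (G k)) (G k)" for k
    by (simp add: G_def)
  have G_good: "finite (G k) \<and> G k \<subseteq> S \<and> card (G k) = k \<and> (\<forall>u\<in>G k. \<forall>v\<in>G k. R u v)" for k
  proof (induction k)
    case 0
    then show ?case by (simp add: G_def)
  next
    case (Suc k)
    then have "finite (G k)" "G k \<subseteq> S" "\<forall>u\<in>G k. \<forall>v\<in>G k. R u v"
      by simp_all
    from extend[OF this]
    have "\<exists>d. d \<in> S - G k \<and> R d d \<and> (\<forall>u\<in>G k. R d u \<and> R u d)"
      by blast
    then have "next_elem (G k) \<in> S - G k \<and> R (next_elem (G k)) (next_elem (G k)) \<and>
        (\<forall>u\<in>G k. R (next_elem (G k)) u \<and> R u (next_elem (G k)))"
      unfolding next_elem_def by (rule someI_ex)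
    then show ?case
      using Suc.IH by (auto simp: G_Suc)
  qed
  show ?thesis
  proof (rule that)
    show "mono G"
      by (rule incseq_SucI) (auto simp: G_Suc)
  qed (use G_good in auto)
qed

lemma infinite_pairwise_set_by_extension:
  assumes extend: "\<And>F. finite F \<Longrightarrow> F \<subseteq> S \<Longrightarrow> \<forall>u\<in>F. \<forall>v\<in>F. R u v \<Longrightarrow>
      \<exists>d\<in>S - F. R d d \<and> (\<forall>u\<in>F. R d u \<and> R u d)"
  obtains A where "A \<subseteq> S" "infinite A" "\<And>u v. u \<in> A \<Longrightarrow> v \<in> A \<Longrightarrow> R u v"
proof -
  from pairwise_chain_by_extension[OF extend]
  obtain G :: "nat \<Rightarrow> _" where G: "mono G" "\<And>k. finite (G k)" "\<And>k. G k \<subseteq> S"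
    "\<And>k. card (G k) = k" "\<And>k u v. u \<in> G k \<Longrightarrow> v \<in> G k \<Longrightarrow> R u v"
    by blast
  show ?thesis
  proof (rule that)
    show "(\<Union>k. G k) \<subseteq> S"
      using G(3) by blast
    show "R u v" if uv: "u \<in> (\<Union>k. G k)" "v \<in> (\<Union>k. G k)" for u v
    proof -
      obtain k j where "u \<in> G k" "v \<in> G j"
        using uv by blast
      then have "u \<in> G (max k j)" "v \<in> G (max k j)"
        using monoD[OF G(1), of k "max k j"] monoD[OF G(1), of j "max k j"] by auto
      then show ?thesis
        by (rule G(5))
    qed
    show "infinite (\<Union>k. G k)"
    proof
      assume "finite (\<Union>k. G k)"
      then have "card (G (Suc (card (\<Union>k. G k)))) \<le> card (\<Union>k. G k)"
        by (intro card_mono) auto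
      then show False
        using G(4) by simp
    qed
  qed
qed

lemma embedding_map_from_discrete:
  assumes "embedding_map (discrete_topology UNIV) euclidean h"
  shows "inj h" "discrete (range h)"
proof -
  have hom: "homeomorphic_map (discrete_topology UNIV) (subtopology euclidean (range h)) h"
    using assms by (simp add: embedding_map_def)
  then show "inj h"
    using homeomorphic_imp_injective_map[OF hom] by simp
  show "discrete (range h)"
  proof (rule discreteI, clarify)
    fix x
    have "openin (subtopology euclidean (range h)) (h ` {x})"
      using homeomorphic_map_openness[OF hom, of "{x}"] by simp
    then obtain T where "open T" "h ` {x} = T \<inter> range h"
      by (auto simp: openin_subtopology)
    then show "h x isolated_in range h"
      by (intro isolated_inI[of _ _ T]) auto
  qed
qed

locale periodic_unipotent =
  fixes e :: "'a::ab_semigroup_mult"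
  assumes idem: "e * e = e"
    and spow_eq_e: "\<And>x. \<exists>k\<ge>1. spow x k = e"
begin

text \<open>Multiplication by \<open>e\<close> retracts the semigroup onto the maximal subgroup \<open>group_part\<close>
  of \<open>e\<close>; \<open>nil_part\<close> is the kernel of this retraction, a nil semigroup with zero \<open>e\<close>.\<close>
abbreviation group_part :: "'a set" where
  "group_part \<equiv> {u. u * e = u}"

abbreviation nil_part :: "'a set" where
  "nil_part \<equiv> {u. u * e = e}"

lemma spow_e [simp]: "spow e k = e"
proof (induction k)
  case (Suc k)
  then show ?case by (cases k) (auto simp: idem)
qed simp

lemma spow_in_group_part:
  assumes "spow x k = e" "k \<ge> 1" "k \<le> m"
  shows "spow x m * e = spow x m"
proof (cases "k = m")
  case False
  then have "spow x m = spow x (m - k) * spow x k"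
    using assms spow_add[of "m - k" k x] by simp
  then show ?thesis
    using assms(1) idem by (simp add: mult.assoc)
qed (use assms idem in simp)

lemma spow_in_nil_part: "a \<in> nil_part \<Longrightarrow> spow a k \<in> nil_part"
  by (induction a k rule: spow.induct) (auto simp: mult.assoc)

lemma mult_pow_e: "a \<in> nil_part \<Longrightarrow> mult_pow a k e = e"
  by (induction k) (simp_all add: mult_pow_Suc)

lemma nil_part_spow_eq_e_mono:
  assumes "a \<in> nil_part" "spow a k = e" "k \<ge> 1" "k \<le> m"
  shows "spow a m = e"
  using spow_in_group_part[OF assms(2-4)] spow_in_nil_part[OF assms(1)] by simp

lemma nil_part_eventually_e:
  assumes "a \<in> nil_part"
  obtains k0 where "k0 \<ge> 1" "\<And>k. k \<ge> k0 \<Longrightarrow> spow a k = e"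
  using spow_eq_e[of a] nil_part_spow_eq_e_mono[OF assms] by blast

lemma nil_part_last_nonzero_pow:
  assumes "a \<in> nil_part" "spow a N \<noteq> e"
  obtains s where "s \<ge> N" "spow a s \<noteq> e" "\<And>k. k > s \<Longrightarrow> spow a k = e"
proof -
  obtain k0 where k0: "\<And>k. k \<ge> k0 \<Longrightarrow> spow a k = e"
    using nil_part_eventually_e[OF assms(1)] by blast
  define K where "K = {k. spow a k \<noteq> e}"
  have "K \<subseteq> {..<k0}"
  proof
    fix k
    assume "k \<in> K"
    then show "k \<in> {..<k0}"
      using k0[of k] by (cases "k0 \<le> k") (auto simp: K_def)
  qed
  then have "finite K"
    by (rule finite_subset) simp
  moreover have "N \<in> K"
    using assms(2) by (simp add: K_def)
  ultimately have "N \<le> Max K" "Max K \<in> K"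
    by (auto intro!: Max_ge Max_in)
  show ?thesis
  proof (rule that)
    show "N \<le> Max K" "spow a (Max K) \<noteq> e"
      using \<open>Max K \<in> K\<close> \<open>N \<le> Max K\<close> by (simp_all add: K_def)
    show "spow a k = e" if "k > Max K" for k
      using Max_ge[OF \<open>finite K\<close>, of k] that by (cases "spow a k = e") (auto simp: K_def)
  qed
qed

text \<open>An element fixed by \<open>a\<^sup>p\<close> is fixed by all powers of \<open>a\<^sup>p\<close>, and the large ones act as \<open>e\<close>.\<close>
lemma nil_part_mult_pow_fixed:
  assumes "a \<in> nil_part" "p \<ge> 1" "mult_pow a p d = d"
  shows "d * e = d"
proof -
  obtain k0 where k0: "k0 \<ge> 1" "\<And>k. k \<ge> k0 \<Longrightarrow> spow a k = e"
    using nil_part_eventually_e[OF assms(1)] by blast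
  have "d = mult_pow a (p * k0) d"
    using funpow_mod_eq[where f="(*) a" and n=p and x=d and m="p * k0"] assms(3)
    by (simp add: mult_pow_def)
  also have "\<dots> = spow a (p * k0) * d"
    using assms(2) k0(1) by (simp add: mult_pow_eq_spow)
  also have "spow a (p * k0) = e"
    using assms(2) by (intro k0(2)) simp
  finally have "d = e * d" .
  then show ?thesis
    by (metis mult.commute)
qed

lemma inj_on_spow_nil_part:
  assumes "a \<in> nil_part" "spow a s \<noteq> e"
  shows "inj_on (spow a) {1..s}"
proof -
  have distinct: "spow a t \<noteq> spow a t'" if "t \<ge> 1" "t < t'" "t' \<le> s" for t t'
  proof
    assume eq: "spow a t = spow a t'"
    have "mult_pow a (t' - t) (spow a t) = spow a (t' - t) * spow a t"
      using that(2) by (simp add: mult_pow_eq_spow)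
    also have "\<dots> = spow a t'"
      using spow_add[of "t' - t" t a] that(1,2) by simp
    finally have fixed: "mult_pow a (t' - t) (spow a t) = spow a t"
      using eq by simp
    have "spow a t * e = spow a t"
      by (rule nil_part_mult_pow_fixed[OF assms(1) _ fixed]) (use that(2) in simp)
    then have "spow a t = e"
      using spow_in_nil_part[OF assms(1)] by simp
    then show False
      using nil_part_spow_eq_e_mono[OF assms(1) _ that(1), of s] that assms(2) by simp
  qed
  show ?thesis
  proof (intro inj_onI)
    fix t t'
    assume "t \<in> {1..s}" "t' \<in> {1..s}" "spow a t = spow a t'"
    then show "t = t'"
      using distinct[of t t'] distinct[of t' t] by (cases t t' rule: linorder_cases) auto
  qed
qed

lemma mult_pow_cycle_eq_e:
  assumes "a \<in> nil_part" "c \<in> nil_part" "r < r'" "mult_pow a r c = mult_pow a r' c"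
  shows "mult_pow a r c = e"
proof -
  have "mult_pow a (r' - r) (mult_pow a r c) = mult_pow a r' c"
    using assms(3) by (simp add: mult_pow_add)
  then have fixed: "mult_pow a (r' - r) (mult_pow a r c) = mult_pow a r c"
    using assms(4) by simp
  have "mult_pow a r c * e = mult_pow a r c"
    by (rule nil_part_mult_pow_fixed[OF assms(1) _ fixed]) (use assms(3) in simp)
  then show ?thesis
    using assms(1,2) by (simp add: mult_pow_mult mult_pow_e)
qed

lemma group_part_inverse:
  assumes x: "x \<in> group_part"
  shows "\<exists>y\<in>group_part. x * y = e"
proof -
  obtain k where k: "k \<ge> 1" "spow x k = e"
    using spow_eq_e by blast
  show ?thesis
  proof (cases "k = 1")
    case True
    then show ?thesis using k x idem by auto
  next
    case False
    define y where "y = spow x (k - 1) * e"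
    have "x * y = spow x k * e"
      using k False spow_Suc[of "k - 1" x] by (simp add: y_def ac_simps)
    moreover have "y \<in> group_part"
      using idem by (simp add: y_def mult.assoc)
    ultimately show ?thesis
      using k idem by auto
  qed
qed

lemma is_subgroup_group_part: "is_subgroup group_part"
proof -
  have "x * y \<in> group_part" if "x \<in> group_part" "y \<in> group_part" for x y
    using that by (simp add: mult.assoc)
  moreover have "e * x = x \<and> x * e = x \<and> (\<exists>y\<in>group_part. x * y = e \<and> y * x = e)"
    if "x \<in> group_part" for x
    using that group_part_inverse[OF that] by (simp add: mult.commute[of _ x])
  ultimately show ?thesis
    unfolding is_subgroup_def using idem by blast
qed

text \<open>With \<open>s\<close> the last exponent such that \<open>a\<^sup>s \<noteq> e\<close>, the \<open>card F + 1\<close> powers \<open>a\<^sup>t\<close>,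
  \<open>s - card F \<le> t \<le> s\<close>, are distinct, and they square to \<open>e\<close> because \<open>2 t > s\<close>.\<close>
lemma nil_part_square_zero_power:
  assumes "a \<in> nil_part" "finite F" "spow a N \<noteq> e" "N \<ge> T + 2 * card F + 2"
  obtains t where "t \<ge> 1" "t \<ge> T" "spow a t \<notin> F" "spow a t * spow a t = e"
proof -
  obtain s where s: "s \<ge> N" "spow a s \<noteq> e" "\<And>k. k > s \<Longrightarrow> spow a k = e"
    using nil_part_last_nonzero_pow[OF assms(1,3)] by blast
  define I where "I = {s - card F..s}"
  have "inj_on (spow a) I"
    using inj_on_spow_nil_part[OF assms(1) s(2)]
    by (rule inj_on_subset) (use s assms(4) in \<open>auto simp: I_def\<close>)
  then have card_I: "card (spow a ` I) = Suc (card F)"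
    using s(1) assms(4) by (simp add: card_image I_def)
  have "\<not> spow a ` I \<subseteq> F"
  proof
    assume "spow a ` I \<subseteq> F"
    then have "card (spow a ` I) \<le> card F"
      by (rule card_mono[OF assms(2)])
    then show False
      using card_I by simp
  qed
  then obtain t where t: "t \<in> I" "spow a t \<notin> F"
    by blast
  have t_bounds: "t \<ge> 1" "t \<ge> T" "t + t > s"
    using t(1) s(1) assms(4) by (auto simp: I_def)
  show ?thesis
  proof (rule that)
    show "spow a t * spow a t = e"
      using spow_add[OF t_bounds(1) t_bounds(1), of a] s(3)[OF t_bounds(3)] by simp
  qed (use t_bounds t(2) in auto)
qed

lemma group_part_subset_max_subgroup: "group_part \<subseteq> max_subgroup e"
  unfolding max_subgroup_def by (rule Union_upper) (simp add: idem is_subgroup_group_part)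

end

lemma periodic_unipotentI:
  assumes "periodic_semigroup TYPE('a::ab_semigroup_mult)"
    and "idempotent (e::'a)" and "\<forall>f::'a. idempotent f \<longrightarrow> f = e"
  shows "periodic_unipotent e"
proof
  show "e * e = e"
    using assms(2) by (simp add: idempotent_def)
  show "\<exists>k\<ge>1. spow x k = e" for x
  proof -
    obtain k where "k \<ge> 1" "idempotent (spow x k)"
      using assms(1) unfolding periodic_semigroup_def by blast
    then show ?thesis
      using assms(3) by blast
  qed
qed

locale T1S_embedding = periodic_unipotent e for e :: "'a::ab_semigroup_mult" +
  fixes n :: nat and h :: "'a \<Rightarrow> 'b::{topological_semigroup_mult,t1_space}"
  assumes exponent_pos: "n \<ge> 1"
    and group_exponent: "\<And>u. u \<in> group_part \<Longrightarrow> spow u n = e"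
    and products_not_singleton:
      "\<And>A :: 'a set. infinite A \<Longrightarrow> \<not> (\<exists>z. {x * y | x y. x \<in> A \<and> y \<in> A} = {z})"
    and h_mult: "\<And>x y. h (x * y) = h x * h y"
    and inj_h: "inj h"
    and discrete_range: "discrete (range h)"
begin

lemma h_spow: "h (spow x k) = spow (h x) k"
  using spow_hom[of h] h_mult by blast

lemma no_infinite_constant_products:
  fixes A :: "'a set"
  assumes "infinite A" "\<And>x y. x \<in> A \<Longrightarrow> y \<in> A \<Longrightarrow> x * y = z"
  shows False
proof -
  obtain a where "a \<in> A"
    using assms(1) infinite_imp_nonempty by blast
  then have "{x * y | x y. x \<in> A \<and> y \<in> A} = {z}"
    using assms(2) by blast
  then show False
    using products_not_singleton[OF assms(1)] by blast
qed

lemma tendsto_image_imp_eventually_eq: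
  assumes "((\<lambda>x. h (g x)) \<longlongrightarrow> h c) F"
  shows "eventually (\<lambda>x. g x = c) F"
proof -
  obtain W where W: "open W" "W \<inter> range h = {h c}"
    using discrete_range by (auto simp: discrete_def isolated_in_def)
  then have "eventually (\<lambda>x. h (g x) \<in> W) F"
    using assms topological_tendstoD by blast
  then show ?thesis
  proof (rule eventually_mono)
    fix x
    assume "h (g x) \<in> W"
    then have "h (g x) = h c"
      using W(2) by blast
    then show "g x = c"
      using inj_h by (simp add: inj_eq)
  qed
qed

lemma islimpt_image_not_in_range: "t islimpt h ` A \<Longrightarrow> t \<notin> range h"
  using discrete_range islimpt_subset[of t "h ` A" "range h"]
  by (auto simp: discrete_def isolated_in_islimpt_iff)

lemma islimpt_image_iff: "t islimpt h ` A \<longleftrightarrow> t \<in> closure (h ` A) \<and> t \<notin> range h"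
  using islimpt_image_not_in_range by (auto simp: closure_def)

definition near :: "'b \<Rightarrow> 'a set \<Rightarrow> 'a filter" where
  "near t A = filtercomap h (at t within h ` A)"

lemma tendsto_near: "(h \<longlongrightarrow> t) (near t A)"
  unfolding near_def by (rule filterlim_compose[OF tendsto_ident_at filterlim_filtercomap])

lemma eventually_near_mem: "eventually (\<lambda>a. a \<in> A) (near t A)"
  unfolding near_def eventually_filtercomap
  by (intro exI[of _ "\<lambda>b. b \<in> h ` A"]) (auto simp: eventually_at_filter inj_image_mem_iff[OF inj_h])

lemma infinite_near:
  assumes "t islimpt h ` A" "eventually P (near t A)"
  shows "infinite {a \<in> A. P a}"
proof
  assume fin: "finite {a \<in> A. P a}"
  obtain Q where Q: "eventually Q (at t within h ` A)" "\<And>a. Q (h a) \<Longrightarrow> P a"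
    using assms(2) by (auto simp: near_def eventually_filtercomap)
  have "{b \<in> h ` A. Q b} \<subseteq> h ` {a \<in> A. P a}"
    using Q(2) by auto
  then have "\<not> t islimpt {b \<in> h ` A. Q b}"
    using fin by (meson finite_imageI finite_subset islimpt_finite)
  then have "eventually (\<lambda>b. b \<notin> {b \<in> h ` A. Q b}) (at t)"
    by (simp add: islimpt_iff_eventually)
  moreover have "eventually (\<lambda>b. b \<in> h ` A \<longrightarrow> Q b) (at t)"
    using Q(1) by (simp add: eventually_at_filter)
  ultimately have "eventually (\<lambda>b. b \<notin> h ` A) (at t)"
    by eventually_elim auto
  then show False
    using assms(1) by (simp add: islimpt_iff_eventually)
qed

lemma near_witness:
  assumes "t islimpt h ` A" "eventually P (near t A)"
  obtains a where "a \<in> A" "P a"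
  using infinite_near[OF assms] infinite_imp_nonempty by blast

text \<open>Since \<open>range h\<close> is discrete, \<open>g\<close> is eventually constant near \<open>(t, t)\<close>.\<close>
lemma infinite_set_constant_products:
  assumes "t islimpt h ` A" "((\<lambda>p. h (g p)) \<longlongrightarrow> h c) (near t A \<times>\<^sub>F near t A)"
  obtains B where "B \<subseteq> A" "infinite B" "\<And>x y. x \<in> B \<Longrightarrow> y \<in> B \<Longrightarrow> g (x, y) = c"
proof -
  obtain P Q where PQ: "eventually P (near t A)" "eventually Q (near t A)"
    "\<And>x y. P x \<Longrightarrow> Q y \<Longrightarrow> g (x, y) = c"
    using tendsto_image_imp_eventually_eq[OF assms(2)] unfolding eventually_prod_filter by auto
  have "infinite {a \<in> A. P a \<and> Q a}"
    using infinite_near[OF assms(1) eventually_conj[OF PQ(1,2)]] .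
  then show ?thesis
    using PQ(3) by (intro that[of "{a \<in> A. P a \<and> Q a}"]) auto
qed

lemma tendsto_near_fst: "((\<lambda>p. h (fst p)) \<longlongrightarrow> t) (near t A \<times>\<^sub>F near t A)"
  by (rule filterlim_compose[OF tendsto_near filterlim_fst])

lemma tendsto_near_snd: "((\<lambda>p. h (snd p)) \<longlongrightarrow> t) (near t A \<times>\<^sub>F near t A)"
  by (rule filterlim_compose[OF tendsto_near filterlim_snd])

lemma group_part_spow_inverse:
  assumes "v \<in> group_part"
  shows "v * spow v (2 * n - 1) = e"
proof -
  have "v * spow v (2 * n - 1) = spow v (Suc (2 * n - 1))"
    using exponent_pos spow_Suc[of "2 * n - 1" v] by (simp add: mult.commute)
  also have "\<dots> = spow v (n + n)"
    using exponent_pos by (simp add: mult_2)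
  also have "\<dots> = e"
    using spow_add[OF exponent_pos exponent_pos, of v] group_exponent[OF assms] idem by simp
  finally show ?thesis .
qed

lemma group_part_cancel:
  assumes "u \<in> group_part" "v \<in> group_part" "u * spow v (2 * n - 1) = e"
  shows "u = v"
proof -
  have "u = u * (v * spow v (2 * n - 1))"
    using assms(1) group_part_spow_inverse[OF assms(2)] by simp
  also have "\<dots> = (u * spow v (2 * n - 1)) * v"
    by (simp add: ac_simps)
  also have "\<dots> = v"
    using assms(2,3) by (simp add: mult.commute)
  finally show ?thesis .
qed

lemma closed_image_group_part: "closed (h ` group_part)"
  unfolding closed_limpt
proof (intro allI impI)
  fix t
  assume t: "t islimpt h ` group_part"
  define K where "K = 2 * n - 1"
  have "(\<lambda>x. x * spow x K) ` h ` group_part \<subseteq> {h e}"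
    using group_part_spow_inverse by (auto simp: K_def h_mult[symmetric] h_spow[symmetric])
  moreover have "t \<in> closure (h ` group_part)"
    using t by (simp add: islimpt_image_iff)
  ultimately have "t * spow t K \<in> closure {h e}"
    by (rule closure_image_mem[rotated])
      (intro continuous_on_mult' continuous_on_spow continuous_on_id)
  moreover have "((\<lambda>p. h (fst p) * spow (h (snd p)) K) \<longlongrightarrow> t * spow t K)
      (near t group_part \<times>\<^sub>F near t group_part)"
    by (intro tendsto_mult tendsto_spow tendsto_near_fst tendsto_near_snd)
  ultimately have "((\<lambda>p. h (fst p * spow (snd p) K)) \<longlongrightarrow> h e)
      (near t group_part \<times>\<^sub>F near t group_part)"
    by (simp add: h_mult h_spow)
  from infinite_set_constant_products[OF t this]
  obtain B where B: "B \<subseteq> group_part" "infinite B"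
    "\<And>x y. x \<in> B \<Longrightarrow> y \<in> B \<Longrightarrow> x * spow y K = e"
    by auto
  obtain u where u: "u \<in> B"
    using B(2) infinite_imp_nonempty by blast
  obtain v where v: "v \<in> B - {u}"
    using infinite_remove[OF B(2), of u] infinite_imp_nonempty by blast
  have "u = v"
    using u v B by (auto simp: K_def intro!: group_part_cancel[of u v])
  then show "t \<in> h ` group_part"
    using v by blast
qed

lemma square_not_in_range:
  assumes "t islimpt range h"
  shows "t * t \<notin> range h"
proof
  assume "t * t \<in> range h"
  then obtain c where c: "t * t = h c"
    by blast
  have "((\<lambda>p. h (fst p * snd p)) \<longlongrightarrow> h c) (near t UNIV \<times>\<^sub>F near t UNIV)"
    unfolding h_mult c[symmetric] by (intro tendsto_mult tendsto_near_fst tendsto_near_snd)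
  from infinite_set_constant_products[OF assms this]
  obtain B where "infinite B" "\<And>x y. x \<in> B \<Longrightarrow> y \<in> B \<Longrightarrow> x * y = c"
    by auto
  then show False
    by (rule no_infinite_constant_products)
qed

lemma spow_closure_range:
  assumes "t \<in> closure (range h)"
  shows "spow t k \<in> closure (range h)"
proof (rule closure_image_mem[OF continuous_on_spow[OF continuous_on_id] _ assms])
  show "(\<lambda>u. spow u k) ` range h \<subseteq> range h"
    by (auto simp: h_spow[symmetric])
qed

lemma islimpt_spow_pow2:
  assumes "t islimpt range h"
  shows "spow t (2 ^ j) islimpt range h"
proof (induction j)
  case 0
  then show ?case using assms by simp
next
  case (Suc j)
  have "spow t (2 ^ Suc j) = spow t (2 ^ j) * spow t (2 ^ j)"
    using spow_add[of "2 ^ j" "2 ^ j" t] by (simp add: mult_2)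
  then have "spow t (2 ^ Suc j) \<notin> range h"
    using square_not_in_range[OF Suc.IH] by simp
  moreover have "spow t (2 ^ Suc j) \<in> closure (range h)"
    using assms spow_closure_range by (simp add: islimpt_image_iff[of _ UNIV])
  ultimately show ?case
    by (simp add: islimpt_image_iff[of _ UNIV])
qed

text \<open>Otherwise \<open>z * h x\<close> would be a limit point of \<open>range h\<close> whose powers \<open>(z * h x)\<^bsup>2^k\<^esub>\<close>,
  where \<open>x\<^sup>k = e\<close>, lie in the closed set \<open>h ` group_part\<close>.\<close>
lemma islimpt_mult_in_range:
  assumes "z islimpt range h"
  shows "z * h x \<in> range h"
proof (rule ccontr)
  assume not_in_range: "z * h x \<notin> range h"
  have z: "z \<in> closure (range h)"
    using assms by (simp add: islimpt_image_iff[of _ UNIV])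
  have "(\<lambda>u. u * h x) ` range h \<subseteq> range h"
    by (auto simp: h_mult[symmetric])
  then have "z * h x \<in> closure (range h)"
    by (rule closure_image_mem[OF continuous_on_mult'[OF continuous_on_id continuous_on_const] _ z])
  with not_in_range have w: "z * h x islimpt range h"
    by (simp add: islimpt_image_iff[of _ UNIV])
  obtain k where k: "spow x k = e" "k \<ge> 1"
    using spow_eq_e by blast
  have "(\<lambda>u. spow (u * h x) (2 ^ k)) ` range h \<subseteq> h ` group_part"
  proof clarify
    fix a
    have "spow x (2 ^ k) * e = spow x (2 ^ k)"
      using spow_in_group_part[OF k, of "2 ^ k"] by (simp add: less_imp_le)
    then have "spow (a * x) (2 ^ k) \<in> group_part"
      by (simp add: spow_mult_distrib mult.assoc)
    moreover have "spow (h a * h x) (2 ^ k) = h (spow (a * x) (2 ^ k))"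
      by (simp add: h_mult h_spow)
    ultimately show "spow (h a * h x) (2 ^ k) \<in> h ` group_part"
      by blast
  qed
  then have "spow (z * h x) (2 ^ k) \<in> closure (h ` group_part)"
    by (rule closure_image_mem[OF continuous_on_spow[OF continuous_on_mult'[OF continuous_on_id
          continuous_on_const]] _ z])
  then have "spow (z * h x) (2 ^ k) \<in> range h"
    using closed_image_group_part by (auto simp: closure_closed)
  then show False
    using islimpt_image_not_in_range[OF islimpt_spow_pow2[OF w]] by blast
qed

lemma islimpt_spow:
  assumes "z islimpt range h" "k \<ge> 1"
  shows "spow z k islimpt range h"
proof -
  have mult_in_range: "spow z j * h x \<in> range h" if "j \<ge> 1" for j x
    using that
  proof (induction j arbitrary: x rule: nat_induct_at_least)
    case base
    then show ?case using islimpt_mult_in_range[OF assms(1)] by simp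
  next
    case (Suc j)
    obtain x' where "z * h x = h x'"
      using islimpt_mult_in_range[OF assms(1)] by blast
    then show ?case
      using Suc.IH[of x'] spow_Suc[OF Suc.hyps, of z] by (simp add: ac_simps)
  qed
  have "spow z k \<notin> range h"
  proof
    assume "spow z k \<in> range h"
    then obtain x where x: "spow z k = h x"
      by blast
    have k_le: "2 ^ k - k \<ge> 1"
      using less_exp[of k] by linarith
    then have "spow z (2 ^ k) = spow z (2 ^ k - k) * spow z k"
      using spow_add[of "2 ^ k - k" k z] assms(2) less_exp[of k] by simp
    then have "spow z (2 ^ k) \<in> range h"
      using mult_in_range[OF k_le, of x] x by simp
    then show False
      using islimpt_spow_pow2[OF assms(1), of k] islimpt_image_not_in_range by blast
  qed
  then show ?thesis
    using spow_closure_range assms(1) by (simp add: islimpt_image_iff[of _ UNIV])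
qed

context
  fixes y
  assumes y: "y islimpt h ` nil_part"
begin

lemma islimpt_range: "y islimpt range h"
  using y by (rule islimpt_subset) blast

lemma eventually_spow_ne_e:
  assumes "k \<ge> 1"
  shows "eventually (\<lambda>a. spow a k \<noteq> e) (near y nil_part)"
proof -
  have "((\<lambda>a. h (spow a k)) \<longlongrightarrow> spow y k) (near y nil_part)"
    unfolding h_spow by (intro tendsto_spow tendsto_near)
  moreover have "spow y k \<noteq> h e"
    using islimpt_image_not_in_range[OF islimpt_spow[OF islimpt_range assms]] by blast
  ultimately have "eventually (\<lambda>a. h (spow a k) \<noteq> h e) (near y nil_part)"
    by (rule tendsto_imp_eventually_ne)
  then show ?thesis
    by (rule eventually_mono) auto
qed

definition shift :: "'a \<Rightarrow> 'a" where
  "shift x = (SOME x'. h x' = y * h x)"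

lemma h_shift: "h (shift x) = y * h x"
proof -
  obtain x' where "h x' = y * h x"
    using islimpt_mult_in_range[OF islimpt_range, of x] by auto
  then show ?thesis
    unfolding shift_def by (rule someI)
qed

lemma eventually_mult_eq_shift: "eventually (\<lambda>a. a * x = shift x) (near y nil_part)"
proof (rule tendsto_image_imp_eventually_eq)
  show "((\<lambda>a. h (a * x)) \<longlongrightarrow> h (shift x)) (near y nil_part)"
    unfolding h_mult h_shift by (intro tendsto_mult tendsto_near tendsto_const)
qed

lemma eventually_funpow_shift_eq_mult_pow:
  "eventually (\<lambda>a. a \<in> nil_part \<and> (\<forall>r\<le>R. (shift ^^ r) c = mult_pow a r c)) (near y nil_part)"
proof -
  have "eventually (\<lambda>a. \<forall>r\<in>{..<R}. a * (shift ^^ r) c = shift ((shift ^^ r) c)) (near y nil_part)"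
    using eventually_mult_eq_shift by (intro eventually_ball_finite) auto
  then show ?thesis
  proof (rule eventually_elim2[OF eventually_near_mem])
    fix a
    assume "a \<in> nil_part" and a: "\<forall>r\<in>{..<R}. a * (shift ^^ r) c = shift ((shift ^^ r) c)"
    have "(shift ^^ r) c = mult_pow a r c" if "r \<le> R" for r
      using that
    proof (induction r)
      case (Suc r)
      then show ?case
        using a[rule_format, of r] by (simp add: mult_pow_Suc)
    qed simp
    with \<open>a \<in> nil_part\<close> show "a \<in> nil_part \<and> (\<forall>r\<le>R. (shift ^^ r) c = mult_pow a r c)"
      by blast
  qed
qed

lemma funpow_shift_eq_mult_pow:
  obtains a where "a \<in> nil_part" "\<And>r. r \<le> R \<Longrightarrow> (shift ^^ r) c = mult_pow a r c"
  using near_witness[OF y eventually_funpow_shift_eq_mult_pow] by blast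

lemma funpow_shift_products:
  assumes "c \<in> nil_part" "c * c = e"
  shows "(shift ^^ r) c * (shift ^^ s) c = e"
proof -
  obtain a where a: "a \<in> nil_part" "\<And>q. q \<le> r + s \<Longrightarrow> (shift ^^ q) c = mult_pow a q c"
    using funpow_shift_eq_mult_pow[of "r + s" c] by blast
  then have "(shift ^^ r) c * (shift ^^ s) c = mult_pow a (r + s) (c * c)"
    by (simp add: mult_pow_prod)
  then show ?thesis
    using a(1) assms(2) by (simp add: mult_pow_e)
qed

text \<open>The orbit of \<open>c\<close> under \<open>shift\<close> is finite by \<open>funpow_shift_products\<close>, and a repetition
  forces some \<open>(shift ^^ r) c = a\<^sup>r c\<close> to be \<open>e\<close>.\<close>
lemma eventually_mult_pow_eq_e:
  assumes c: "c \<in> nil_part" "c * c = e"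
  shows "\<exists>T. eventually (\<lambda>a. \<forall>t\<ge>T. mult_pow a t c = e) (near y nil_part)"
proof -
  define cs where "cs r = (shift ^^ r) c" for r
  have "\<not> inj cs"
  proof
    assume "inj cs"
    then have "infinite (range cs)"
      using finite_imageD by blast
    then show False
      using funpow_shift_products[OF c] by (auto simp: cs_def intro: no_infinite_constant_products)
  qed
  then obtain r r' where rr: "r < r'" "cs r = cs r'"
    unfolding inj_def by (metis linorder_neqE_nat)
  have cs_e: "cs r = e"
  proof -
    obtain a where a: "a \<in> nil_part" "\<And>q. q \<le> r' \<Longrightarrow> cs q = mult_pow a q c"
      unfolding cs_def using funpow_shift_eq_mult_pow[of r' c] by blast
    then show ?thesis
      using mult_pow_cycle_eq_e[OF a(1) c(1) rr(1)] rr by simp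
  qed
  have "eventually (\<lambda>a. \<forall>t\<ge>r. mult_pow a t c = e) (near y nil_part)"
    using eventually_funpow_shift_eq_mult_pow[of r c]
  proof (rule eventually_mono, intro allI impI)
    fix a t
    assume a: "a \<in> nil_part \<and> (\<forall>q\<le>r. (shift ^^ q) c = mult_pow a q c)" and "t \<ge> r"
    then have "mult_pow a t c = mult_pow a (t - r) (mult_pow a r c)"
      by (simp add: mult_pow_add)
    also have "\<dots> = e"
      using a cs_e by (simp add: cs_def mult_pow_e)
    finally show "mult_pow a t c = e" .
  qed
  then show ?thesis ..
qed

lemma eventually_mult_pow_eq_e_finite:
  assumes "finite F" "F \<subseteq> nil_part" "\<And>u. u \<in> F \<Longrightarrow> u * u = e"
  shows "\<exists>T. eventually (\<lambda>a. \<forall>u\<in>F. \<forall>t\<ge>T. mult_pow a t u = e) (near y nil_part)"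
  using assms
proof (induction F rule: finite_induct)
  case empty
  then show ?case by simp
next
  case (insert u F)
  obtain T1 where T1: "eventually (\<lambda>a. \<forall>t\<ge>T1. mult_pow a t u = e) (near y nil_part)"
    using eventually_mult_pow_eq_e insert.prems by blast
  obtain T2 where T2: "eventually (\<lambda>a. \<forall>v\<in>F. \<forall>t\<ge>T2. mult_pow a t v = e) (near y nil_part)"
    using insert.IH insert.prems by blast
  have "eventually (\<lambda>a. \<forall>v\<in>insert u F. \<forall>t\<ge>max T1 T2. mult_pow a t v = e) (near y nil_part)"
    using eventually_conj[OF T1 T2] by (rule eventually_mono) auto
  then show ?case ..
qed

lemma nil_part_extension:
  assumes F: "finite F" "F \<subseteq> nil_part" "\<forall>u\<in>F. \<forall>v\<in>F. u * v = e"
  shows "\<exists>d\<in>nil_part - F. d * d = e \<and> (\<forall>u\<in>F. d * u = e \<and> u * d = e)"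
proof -
  have "u * u = e" if "u \<in> F" for u
    using F(3) that by blast
  from eventually_mult_pow_eq_e_finite[OF F(1,2) this]
  obtain T where T: "eventually (\<lambda>a. \<forall>u\<in>F. \<forall>t\<ge>T. mult_pow a t u = e) (near y nil_part)" ..
  define N where "N = T + 2 * card F + 2"
  have "eventually (\<lambda>a. spow a N \<noteq> e) (near y nil_part)"
    by (rule eventually_spow_ne_e) (simp add: N_def)
  then have "eventually (\<lambda>a. a \<in> nil_part \<and> (\<forall>u\<in>F. \<forall>t\<ge>T. mult_pow a t u = e) \<and> spow a N \<noteq> e)
      (near y nil_part)"
    by (intro eventually_conj eventually_near_mem T)
  then obtain a where a: "a \<in> nil_part" "\<forall>u\<in>F. \<forall>t\<ge>T. mult_pow a t u = e" "spow a N \<noteq> e"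
    using near_witness[OF y] by blast
  obtain t where t: "t \<ge> 1" "t \<ge> T" "spow a t \<notin> F" "spow a t * spow a t = e"
    using nil_part_square_zero_power[OF a(1) F(1) a(3)] by (auto simp: N_def)
  show ?thesis
  proof (intro bexI[of _ "spow a t"] conjI ballI)
    show "spow a t \<in> nil_part - F"
      using spow_in_nil_part[OF a(1)] t(3) by blast
    fix u
    assume "u \<in> F"
    then show "spow a t * u = e"
      using a(2) t(1,2) mult_pow_eq_spow[of t a u] by simp
    then show "u * spow a t = e"
      by (simp add: mult.commute)
  qed (fact t(4))
qed

lemma infinite_null_set:
  obtains A where "A \<subseteq> nil_part" "infinite A" "\<And>u v. u \<in> A \<Longrightarrow> v \<in> A \<Longrightarrow> u * v = e"
proof (rule infinite_pairwise_set_by_extension[of nil_part "\<lambda>u v. u * v = e"])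
  show "\<exists>d\<in>nil_part - F. d * d = e \<and> (\<forall>u\<in>F. d * u = e \<and> u * d = e)"
    if "finite F" "F \<subseteq> nil_part" "\<forall>u\<in>F. \<forall>v\<in>F. u * v = e" for F
    using that by (rule nil_part_extension)
qed (rule that)

end

lemma not_islimpt_image_nil_part: "\<not> y islimpt h ` nil_part"
proof
  assume "y islimpt h ` nil_part"
  then obtain A where "A \<subseteq> nil_part" "infinite A" "\<And>u v. u \<in> A \<Longrightarrow> v \<in> A \<Longrightarrow> u * v = e"
    using infinite_null_set by blast
  from \<open>infinite A\<close> this(3) show False
    by (rule no_infinite_constant_products)
qed

lemma closed_range: "closed (range h)"
  unfolding closed_limpt
proof (intro allI impI)
  fix z
  assume z: "z islimpt range h"
  have img: "(\<lambda>u. spow u n) ` range h \<subseteq> h ` nil_part"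
  proof clarify
    fix a
    have "spow a n * e = spow (a * e) n"
      by (simp add: spow_mult_distrib)
    also have "\<dots> = e"
      using group_exponent[of "a * e"] idem by (simp add: mult.assoc)
    finally show "spow (h a) n \<in> h ` nil_part"
      by (auto simp: h_spow[symmetric])
  qed
  have "z \<in> closure (range h)"
    using z by (simp add: islimpt_image_iff[of _ UNIV])
  then have "spow z n \<in> closure (h ` nil_part)"
    by (rule closure_image_mem[OF continuous_on_spow[OF continuous_on_id] img])
  then have "spow z n islimpt h ` nil_part"
    using islimpt_image_not_in_range[OF islimpt_spow[OF z exponent_pos]]
    by (simp add: islimpt_image_iff)
  then show "z \<in> range h"
    using not_islimpt_image_nil_part[of "spow z n"] by contradiction
qed

end

lemma (in periodic_unipotent) T1S_closed_in_if_bounded: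
  assumes "n \<ge> 1" "\<forall>u\<in>max_subgroup e. spow u n = e"
    and "\<forall>A::'a set. infinite A \<longrightarrow> \<not> (\<exists>z. {x * y | x y. x \<in> A \<and> y \<in> A} = {z})"
  shows "T1S_closed_in TYPE('b::{topological_semigroup_mult,t1_space}) TYPE('a)"
  unfolding T1S_closed_in_def
proof (intro allI impI, elim conjE)
  fix h :: "'a \<Rightarrow> 'b"
  assume h_mult: "\<forall>x y. h (x * y) = h x * h y"
    and embedding: "embedding_map (discrete_topology UNIV) euclidean h"
  interpret T1S_embedding e n h
  proof unfold_locales
    show "spow u n = e" if "u \<in> group_part" for u
      using that assms(2) group_part_subset_max_subgroup by blast
    show "\<not> (\<exists>z. {x * y | x y. x \<in> A \<and> y \<in> A} = {z})" if "infinite A" for A :: "'a set"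
      using assms(3) that by blast
    show "h (x * y) = h x * h y" for x y
      using h_mult by blast
    show "inj h" "discrete (range h)"
      using embedding_map_from_discrete[OF embedding] by blast+
  qed (fact assms(1))
  show "closed (range h)"
    by (rule closed_range)
qed

theorem lemma4p3:
  fixes e :: "'a::ab_semigroup_mult"
  assumes "periodic_semigroup TYPE('a)"
    and "idempotent e" and "\<forall>f::'a. idempotent f \<longrightarrow> f = e"
    and "bounded_group (max_subgroup e) e"
    and "\<forall>A::'a set. infinite A \<longrightarrow> \<not> (\<exists>z. {x * y | x y. x \<in> A \<and> y \<in> A} = {z})"
  shows "T1S_closed_in TYPE('b::{topological_semigroup_mult,t1_space}) TYPE('a)"
proof -
  interpret periodic_unipotent e
    using assms(1-3) by (rule periodic_unipotentI)
  obtain n where "n \<ge> 1" "\<forall>u\<in>max_subgroup e. spow u n = e"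
    using assms(4) unfolding bounded_group_def by blast
  then show ?thesis
    using assms(5) by (rule T1S_closed_in_if_bounded)
qed

end
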